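(* Let $\prec$ be a reflection order on $T$. Suppose $\Gamma$ contains a diamond with distinct vertices $b,l,r,w$ and edges $b\xrightarrow{t_1}l\xrightarrow{t_2}w$ and $b\xrightarrow{t_1'}r\xrightarrow{t_2'}w$, where $t_1\prec t_1'$. Then $$t_1\prec t_2\succ t_2'\prec t_1'\succ t_1.$$ In particular, if $x_1\to x_2\to x_4$ is an increasing pair of edges, then its diamond flip (the unique pair of edges $x_1\to x_3\to x_4$ such that $\{x_1,x_2,x_3,x_4\}$ is a diamond) is a decreasing pair of edges.
   Context: $S_n$ is the symmetric group with simple reflections $s_i=(i\ i{+}1)$, length function $\ell$, and $T$ the set of all transpositions (reflections). The Bruhat graph $\Gamma$ is the directed graph on $S_n$ with an edge $w\xrightarrow{t}tw$, labelled by $t$, whenever $t\in T$ and $\ell(w)<\ell(tw)$. A reflection order is a total order $\prec$ on $T$ such that for all $1\le a<b<c\le n$ either $(a\,b)\prec(a\,c)\prec(b\,c)$ or $(b\,c)\prec(a\,c)\prec(a\,b)$. A pair of consecutive edges $x\xrightarrow{t}y\xrightarrow{t'}z$ is increasing if $t\prec t'$ and decreasing if $t\succ t'$. A diamond is a subgraph of $\Gamma$ with four distinct vertices $x_1,x_2,x_3,x_4$ and edges $x_1\to x_2\to x_4$, $x_1\to x_3\to x_4$. *)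

theory Defs
  imports "HOL-Combinatorics.Permutations" "HOL-Combinatorics.Transposition"
begin

definition Sn :: "nat \<Rightarrow> (nat \<Rightarrow> nat) set" where
  "Sn n = {w. w permutes {1..n}}"

definition refls :: "nat \<Rightarrow> (nat \<Rightarrow> nat) set" where
  "refls n = {transpose a b | a b. 1 \<le> a \<and> a < b \<and> b \<le> n}"

text \<open>Coxeter length in S_n = number of inversions.\<close>
definition len :: "nat \<Rightarrow> (nat \<Rightarrow> nat) \<Rightarrow> nat" where
  "len n w = card {(i, j). 1 \<le> i \<and> i < j \<and> j \<le> n \<and> w j < w i}"

definition bruhat_edge :: "nat \<Rightarrow> (nat \<Rightarrow> nat) \<Rightarrow> (nat \<Rightarrow> nat) \<Rightarrow> (nat \<Rightarrow> nat) \<Rightarrow> bool" where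
  "bruhat_edge n x t y \<longleftrightarrow> x \<in> Sn n \<and> t \<in> refls n \<and> y = t \<circ> x \<and> len n x < len n y"

definition reflection_order :: "nat \<Rightarrow> ((nat \<Rightarrow> nat) \<times> (nat \<Rightarrow> nat)) set \<Rightarrow> bool" where
  "reflection_order n R \<longleftrightarrow>
     R \<subseteq> refls n \<times> refls n \<and> strict_linear_order_on (refls n) R \<and>
     (\<forall>a b c. 1 \<le> a \<and> a < b \<and> b < c \<and> c \<le> n \<longrightarrow>
        ((transpose a b, transpose a c) \<in> R \<and> (transpose a c, transpose b c) \<in> R) \<or>
        ((transpose b c, transpose a c) \<in> R \<and> (transpose a c, transpose a b) \<in> R))"

end

theory Submission
  imports Defs
begin

(* Since w = t2 t1 b = t2' t1' b, the reflections satisfy t2 t1 = t2' t1'. Apart from the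
  given one, a product t2 t1 of two distinct transpositions factors only as (t2 t1 t2) t2 and
  as t1 (t1 t2 t1). So some reflection s labels the first edge of one path and the last edge
  of the other, and the remaining two labels are x and s x s.
  Left multiplication by (a c), a < c, raises the length iff the value a stands left of the
  value c. For the edges labelled x and s x s this compares the same two positions, which
  forces the point moved by x but not by s to lie outside the interval spanned by the points
  of s. On these three points s is therefore an outer transposition (a b) or (b c), and a
  reflection order never puts it between the other two: s precedes x iff s precedes s x s. *)

lemma transpose_eq_transpose_iff:
  assumes "a \<noteq> b"
  shows "transpose a b = transpose c d \<longleftrightarrow> {a, b} = {c, d}"
  using assms by (auto simp: fun_eq_iff transpose_def doubleton_eq_iff split: if_splits)

lemma transpose_conjugate:
  "transpose p q \<circ> transpose u v \<circ> transpose p q = transpose (transpose p q u) (transpose p q v)"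
  by (simp add: fun_eq_iff transpose_def)

lemma moved_points_comp_transpose:
  assumes "a \<noteq> b" "c \<noteq> d" "transpose a b \<noteq> transpose c d"
  shows "{z. transpose c d (transpose a b z) \<noteq> z} = {a, b, c, d}"
  using assms
  by (auto simp: transpose_eq_transpose_iff transpose_def doubleton_eq_iff split: if_splits)

lemma comp_transpose_eq_cases:
  assumes ab: "a \<noteq> b" and cd: "c \<noteq> d" and pq: "p \<noteq> q" and uv: "u \<noteq> v"
    and eq: "transpose c d \<circ> transpose a b = transpose u v \<circ> transpose p q"
    and t12: "transpose a b \<noteq> transpose c d" and t13: "transpose a b \<noteq> transpose p q"
  shows "transpose p q = transpose c d \<or>
    transpose p q = transpose a b \<circ> transpose c d \<circ> transpose a b"
proof -
  have \<sigma>: "transpose c d (transpose a b z) = transpose u v (transpose p q z)" for z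
    using fun_cong[OF eq, of z] by simp
  have "transpose p q \<noteq> transpose u v"
  proof
    assume "transpose p q = transpose u v"
    then have "transpose c d (transpose a b a) = a" using \<sigma>[of a] by simp
    then show False using moved_points_comp_transpose[OF ab cd t12] by blast
  qed
  then have U: "{a, b, c, d} = {p, q, u, v}"
    using moved_points_comp_transpose[OF ab cd t12] moved_points_comp_transpose[OF pq uv] \<sigma>
    by simp
  show ?thesis
  proof (cases "{a, b} \<inter> {c, d} = {}")
    case True
    have "card {a, b, c, d} = 4" using True ab cd by auto
    then have "card {p, q, u, v} = 4" by (simp only: U)
    then have "u \<notin> {p, q}" "v \<notin> {p, q}"
      by (auto simp: card_insert_if split: if_splits)
    then have "transpose u v q = q" by auto
    then have "transpose c d (transpose a b p) = q" using \<sigma>[of p] by simp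
    moreover have "p \<in> {a, b} \<or> p \<in> {c, d}" using U by blast
    ultimately have "{p, q} = {a, b} \<or> {p, q} = {c, d}"
      using True by (auto simp: transpose_eq_iff)
    then show ?thesis using t13 ab cd by (metis transpose_eq_transpose_iff)
  next
    case False
    then obtain y where "y \<in> {a, b}" "y \<in> {c, d}" by blast
    then obtain x z where xy: "{a, b} = {x, y}" and yz: "{c, d} = {y, z}" by auto
    have xyz: "x \<noteq> y" "y \<noteq> z" "x \<noteq> z"
      using xy yz ab cd t12 transpose_eq_transpose_iff[OF ab] by (auto simp: insert_commute)
    have t1: "transpose a b = transpose x y" and t2: "transpose c d = transpose y z"
      using xy yz by (simp_all add: transpose_eq_transpose_iff ab cd)
    have "{a, b, c, d} = {a, b} \<union> {c, d}" by auto
    then have "{p, q} \<subseteq> {x, y, z}" using U xy yz by auto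
    moreover have "{p, q} \<noteq> {x, y}" using t13 t1 by (simp add: transpose_eq_transpose_iff xyz)
    ultimately have "{p, q} = {y, z} \<or> {p, q} = {x, z}"
      using pq by (auto simp: doubleton_eq_iff)
    then have "transpose p q = transpose y z \<or> transpose p q = transpose x z"
      by (auto simp: transpose_eq_transpose_iff pq)
    then show ?thesis by (simp add: t1 t2 transpose_comp_triple xyz)
  qed
qed

definition inversions :: "nat \<Rightarrow> (nat \<Rightarrow> nat) \<Rightarrow> (nat \<times> nat) set" where
  "inversions n w = {(i, j). 1 \<le> i \<and> i < j \<and> j \<le> n \<and> w j < w i}"

lemma len_eq_card_inversions: "len n w = card (inversions n w)"
  by (simp add: len_def inversions_def)

lemma finite_inversions: "finite (inversions n w)"
  by (rule finite_subset[of _ "{1..n} \<times> {1..n}"]) (auto simp: inversions_def)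

lemma len_less_transpose:
  assumes x: "inj x" and pq: "1 \<le> p" "p < q" "q \<le> n" and xpq: "x p < x q"
  shows "len n x < len n (transpose (x p) (x q) \<circ> x)"
proof -
  define y where "y = transpose (x p) (x q) \<circ> x"
  have yp: "y p = x q" and yq: "y q = x p" by (auto simp: y_def)
  have yk: "y k = x k" if "k \<noteq> p" "k \<noteq> q" for k
    using that x by (auto simp: y_def inj_eq transpose_def)
  \<comment> \<open>Inversions through p or q with the other end strictly between them stay put;
    all others are moved by swapping the positions p and q.\<close>
  define f where "f = (\<lambda>(i, j). if (i = p \<and> j < q) \<or> (j = q \<and> p < i)
    then (i, j) else (transpose p q i, transpose p q j))"
  have "f z \<in> inversions n y - {(p, q)}" if z: "z \<in> inversions n x" for z
  proof -
    obtain i j where ij: "z = (i, j)" "1 \<le> i" "i < j" "j \<le> n" "x j < x i"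
      using z by (auto simp: inversions_def)
    show ?thesis
    proof (cases "(i = p \<and> j < q) \<or> (j = q \<and> p < i)")
      case True
      then show ?thesis using ij yk yp yq xpq by (auto simp: f_def inversions_def)
    next
      case False
      then show ?thesis using ij yk yp yq xpq pq
        by (auto simp: f_def inversions_def transpose_def)
    qed
  qed
  then have "f ` inversions n x \<subseteq> inversions n y - {(p, q)}" by (rule image_subsetI)
  moreover have "inj_on f (inversions n x)"
    unfolding inj_on_def f_def inversions_def transpose_def by auto
  ultimately have "card (inversions n x) \<le> card (inversions n y - {(p, q)})"
    using finite_inversions by (metis card_inj_on_le finite_Diff)
  also have "\<dots> < card (inversions n y)"
    using yp yq xpq pq finite_inversions by (intro card_Diff1_less) (auto simp: inversions_def)
  finally show ?thesis by (simp add: len_eq_card_inversions y_def)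
qed

lemma inv_transpose_comp:
  assumes "x permutes S"
  shows "inv (transpose a c \<circ> x) = inv x \<circ> transpose a c"
  using assms by (simp add: o_inv_distrib permutes_bij)

lemma len_less_transpose_if:
  assumes x: "x permutes {1..n}" and ac: "a \<in> {1..n}" "c \<in> {1..n}" "a \<noteq> c"
    and asc: "(a < c) = (inv x a < inv x c)"
  shows "len n x < len n (transpose a c \<circ> x)"
proof -
  have inj: "inj x" using x by (rule permutes_inj)
  have pos: "inv x a \<in> {1..n}" "inv x c \<in> {1..n}"
    using ac permutes_in_image[OF permutes_inv[OF x]] by auto
  have val: "x (inv x a) = a" "x (inv x c) = c" using x by (simp_all add: permutes_inverses)
  then have "inv x a \<noteq> inv x c" using ac by metis
  then consider "inv x a < inv x c" | "inv x c < inv x a" by linarith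
  then show ?thesis
  proof cases
    case 1
    then show ?thesis using len_less_transpose[OF inj, of "inv x a" "inv x c" n] pos val asc by simp
  next
    case 2
    then show ?thesis
      using len_less_transpose[OF inj, of "inv x c" "inv x a" n] pos val asc ac(3)
      by (simp add: transpose_commute)
  qed
qed

lemma len_less_transpose_iff:
  assumes x: "x permutes {1..n}" and ac: "a \<in> {1..n}" "c \<in> {1..n}" "a \<noteq> c"
  shows "len n x < len n (transpose a c \<circ> x) \<longleftrightarrow> (a < c) = (inv x a < inv x c)"
proof
  assume up: "len n x < len n (transpose a c \<circ> x)"
  show "(a < c) = (inv x a < inv x c)"
  proof (rule ccontr)
    assume down: "(a < c) \<noteq> (inv x a < inv x c)"
    define y where "y = transpose a c \<circ> x"
    have y: "y permutes {1..n}"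
      unfolding y_def using ac by (intro permutes_compose[OF x] permutes_swap_id) auto
    have "inv x a \<noteq> inv x c" using ac x by (metis permutes_inverses(1))
    then have "(a < c) = (inv y a < inv y c)"
      using down by (auto simp: y_def inv_transpose_comp[OF x])
    then have "len n y < len n (transpose a c \<circ> y)" by (rule len_less_transpose_if[OF y ac])
    then show False using up by (simp add: y_def comp_assoc[symmetric])
  qed
qed (rule len_less_transpose_if[OF assms])

lemma bruhat_edge_ascent:
  assumes e: "bruhat_edge n x (transpose a c) y" and ac: "a \<noteq> c"
  shows "(a < c) = (inv x a < inv x c)"
proof -
  obtain a' c' where "transpose a c = transpose a' c'" "1 \<le> a'" "a' < c'" "c' \<le> n"
    using e by (auto simp: bruhat_edge_def refls_def)
  then have "a \<in> {1..n}" "c \<in> {1..n}"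
    by (auto simp: transpose_eq_transpose_iff[OF ac] doubleton_eq_iff)
  then show ?thesis
    using e len_less_transpose_iff[of x n a c] ac by (auto simp: bruhat_edge_def Sn_def)
qed

lemma refls_comp_self: "t \<in> refls n \<Longrightarrow> t \<circ> t = id"
  by (auto simp: refls_def)

lemma reflection_order_strict:
  assumes "reflection_order n R"
  shows "trans R" "irrefl R" "total_on (refls n) R"
  using assms by (simp_all add: reflection_order_def strict_linear_order_on_def)

lemma reflection_order_not_between:
  assumes ro: "reflection_order n R"
    and range: "p \<in> {1..n}" "q \<in> {1..n}" "r \<in> {1..n}"
    and distinct: "p \<noteq> q" "r \<noteq> p" "r \<noteq> q" and side: "(r < p) = (r < q)"
  shows "(transpose p q, transpose r p) \<in> R \<longleftrightarrow> (transpose p q, transpose r q) \<in> R"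
proof -
  have tr: "trans R" and irr: "irrefl R" using reflection_order_strict[OF ro] by auto
  have axiom: "((transpose a b, transpose a c) \<in> R \<and> (transpose a c, transpose b c) \<in> R) \<or>
      ((transpose b c, transpose a c) \<in> R \<and> (transpose a c, transpose a b) \<in> R)"
    if "1 \<le> a" "a < b" "b < c" "c \<le> n" for a b c
    using ro that by (simp add: reflection_order_def)
  have sorted: "(transpose p q, transpose r p) \<in> R \<longleftrightarrow> (transpose p q, transpose r q) \<in> R"
    if pq: "p < q" and pq_range: "p \<in> {1..n}" "q \<in> {1..n}" and rq: "r \<noteq> q"
      and pq_side: "(r < p) = (r < q)" for p q
  proof -
    consider "r < p" | "q < r" using pq_side rq by (metis linorder_neqE_nat)
    then show ?thesis
    proof cases
      case 1
      then show ?thesis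
        using axiom[of r p q] pq_range range(3) pq tr irr unfolding trans_def irrefl_def by auto
    next
      case 2
      then show ?thesis
        using axiom[of p q r] pq_range range(3) pq tr irr unfolding trans_def irrefl_def
        by (auto simp: transpose_commute)
    qed
  qed
  show ?thesis
  proof (cases "p < q")
    case True
    then show ?thesis using sorted range distinct side by blast
  next
    case False
    then have "q < p" using distinct(1) by simp
    then have "(transpose q p, transpose r q) \<in> R \<longleftrightarrow> (transpose q p, transpose r p) \<in> R"
      using sorted range distinct side by blast
    then show ?thesis by (metis transpose_commute)
  qed
qed

lemma conjugate_ascents_same_side:
  assumes ep: "bruhat_edge n (transpose p q \<circ> b) (transpose r p) w"
    and eq: "bruhat_edge n b (transpose r q) v"
    and r: "r \<noteq> p" "r \<noteq> q"
  shows "(r < p) = (r < q)"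
proof -
  have b: "b permutes {1..n}" using eq by (simp add: bruhat_edge_def Sn_def)
  have "(r < p) = (inv (transpose p q \<circ> b) r < inv (transpose p q \<circ> b) p)"
    using bruhat_edge_ascent[OF ep r(1)] .
  also have "\<dots> = (inv b r < inv b q)" using r by (simp add: inv_transpose_comp[OF b])
  also have "\<dots> = (r < q)" using bruhat_edge_ascent[OF eq r(2)] by simp
  finally show ?thesis .
qed

lemma diamond_shared_reflection:
  assumes ro: "reflection_order n R" and s: "s \<in> refls n"
    and ex: "bruhat_edge n (s \<circ> b) x w" and ey: "bruhat_edge n b (s \<circ> x \<circ> s) w'"
  shows "(s, x) \<in> R \<longleftrightarrow> (s, s \<circ> x \<circ> s) \<in> R"
proof -
  obtain p q where pq: "s = transpose p q" "p \<in> {1..n}" "q \<in> {1..n}" "p \<noteq> q"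
    using s by (auto simp: refls_def)
  obtain u v where uv: "x = transpose u v" "u \<in> {1..n}" "v \<in> {1..n}" "u \<noteq> v"
    using ex by (auto simp: bruhat_edge_def refls_def)
  have pivot: "(s, x) \<in> R \<longleftrightarrow> (s, s \<circ> x \<circ> s) \<in> R"
    if "s = transpose p' q'" "x = transpose r p'" "{p', q'} = {p, q}" "r \<in> {1..n}" "r \<notin> {p, q}"
    for p' q' r
  proof -
    have "s \<circ> x \<circ> s = transpose r q'"
      using that pq(4) by (auto simp: transpose_conjugate doubleton_eq_iff)
    then have "(r < p') = (r < q')"
      using conjugate_ascents_same_side[of n p' q' b r w w'] ex ey that by auto
    then show ?thesis
      using reflection_order_not_between[OF ro, of p' q' r] that pq \<open>s \<circ> x \<circ> s = _\<close>
      by (auto simp: doubleton_eq_iff)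
  qed
  show ?thesis
  proof (cases "{u, v} \<inter> {p, q} = {} \<or> {u, v} = {p, q}")
    case True
    then have "s \<circ> x \<circ> s = x"
      using pq uv by (auto simp: transpose_conjugate transpose_eq_transpose_iff doubleton_eq_iff)
    then show ?thesis by simp
  next
    case False
    then consider "u \<in> {p, q}" "v \<notin> {p, q}" | "v \<in> {p, q}" "u \<notin> {p, q}"
      using uv(4) by auto
    then show ?thesis
    proof cases
      case 1
      then show ?thesis
        using pivot[of p q v] pivot[of q p v] pq uv by (auto simp: transpose_commute insert_commute)
    next
      case 2
      then show ?thesis
        using pivot[of p q u] pivot[of q p u] pq uv by (auto simp: transpose_commute insert_commute)
    qed
  qed
qed

lemma diamond_reflection_order:
  assumes ro: "reflection_order n R" and bw: "b \<noteq> w" and lr: "l \<noteq> r"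
    and e1: "bruhat_edge n b t1 l" and e2: "bruhat_edge n l t2 w"
    and e1': "bruhat_edge n b t1' r" and e2': "bruhat_edge n r t2' w"
    and less: "(t1, t1') \<in> R"
  shows "(t1, t2) \<in> R \<and> (t2', t2) \<in> R \<and> (t2', t1') \<in> R"
proof -
  have refls: "t1 \<in> refls n" "t2 \<in> refls n" "t1' \<in> refls n" "t2' \<in> refls n"
    using e1 e2 e1' e2' by (auto simp: bruhat_edge_def)
  have vertices: "l = t1 \<circ> b" "w = t2 \<circ> l" "r = t1' \<circ> b" "w = t2' \<circ> r"
    using e1 e2 e1' e2' by (auto simp: bruhat_edge_def)
  have b: "b permutes {1..n}" using e1 by (simp add: bruhat_edge_def Sn_def)
  have eq: "t2 \<circ> t1 = t2' \<circ> t1'"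
    using vertices permutes_inv_o(1)[OF b] by (metis comp_assoc comp_id)
  have "t1 \<noteq> t2"
    using bw vertices refls_comp_self[OF refls(1)] by (metis comp_assoc comp_id id_comp)
  moreover have "t1 \<noteq> t1'" using lr vertices by blast
  moreover obtain a1 c1 a2 c2 a3 c3 a4 c4 where
    "t1 = transpose a1 c1" "t2 = transpose a2 c2" "t1' = transpose a3 c3" "t2' = transpose a4 c4"
    "a1 \<noteq> c1" "a2 \<noteq> c2" "a3 \<noteq> c3" "a4 \<noteq> c4"
    using refls unfolding refls_def by blast
  ultimately have factorizations: "t1' = t2 \<or> t1' = t1 \<circ> t2 \<circ> t1"
    using eq comp_transpose_eq_cases by metis
  have t2': "t2' = t2 \<circ> t1 \<circ> t1'"
    using eq refls_comp_self[OF refls(3)] by (metis comp_assoc comp_id)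
  have tr: "trans R" and irr: "irrefl R" and total: "total_on (refls n) R"
    using reflection_order_strict[OF ro] by auto
  have asym: "(y, x) \<notin> R" if "(x, y) \<in> R" for x y
    using that tr irr by (auto simp: trans_def irrefl_def)
  from factorizations show ?thesis
  proof
    assume t1': "t1' = t2"
    have "t2 \<circ> t2' \<circ> t2 = t1"
      using t2' t1' fun_cong[OF refls_comp_self[OF refls(2)]] by (simp add: fun_eq_iff)
    then have "(t2, t2') \<in> R \<longleftrightarrow> (t2, t1) \<in> R"
      using diamond_shared_reflection[OF ro refls(2), of b t2' w l] e2' e1 vertices t1' by simp
    moreover have "t2' \<noteq> t2"
      using lr vertices refls_comp_self[OF refls(2)] by (metis comp_assoc id_comp)
    ultimately have "(t2', t2) \<in> R"
      using less t1' asym total refls unfolding total_on_def by blast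
    then show ?thesis using less t1' by simp
  next
    assume t1': "t1' = t1 \<circ> t2 \<circ> t1"
    have "t2' = t1"
      using t2' t1' fun_cong[OF refls_comp_self[OF refls(1)]]
        fun_cong[OF refls_comp_self[OF refls(2)]]
      by (simp add: fun_eq_iff)
    moreover have "(t1, t2) \<in> R \<longleftrightarrow> (t1, t1') \<in> R"
      using diamond_shared_reflection[OF ro refls(1), of b t2 w r] e2 e1' vertices t1' by simp
    ultimately show ?thesis using less by simp
  qed
qed

lemma diamond_flip_decreasing:
  assumes ro: "reflection_order n R" and x14: "x1 \<noteq> x4" and x23: "x2 \<noteq> x3"
    and e: "bruhat_edge n x1 t x2" "bruhat_edge n x2 t' x4"
      "bruhat_edge n x1 u x3" "bruhat_edge n x3 u' x4"
    and increasing: "(t, t') \<in> R"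
  shows "(u', u) \<in> R"
proof -
  have tr: "trans R" and irr: "irrefl R" and total: "total_on (refls n) R"
    using reflection_order_strict[OF ro] by auto
  have "t \<noteq> u" using x23 e(1,3) by (auto simp: bruhat_edge_def)
  moreover have "t \<in> refls n" "u \<in> refls n" using e(1,3) by (auto simp: bruhat_edge_def)
  ultimately consider "(t, u) \<in> R" | "(u, t) \<in> R" using total by (auto simp: total_on_def)
  then show ?thesis
  proof cases
    case 1
    then show ?thesis using diamond_reflection_order[OF ro x14 x23 e] by blast
  next
    case 2
    then have "(t', t) \<in> R"
      using diamond_reflection_order[OF ro x14 x23[symmetric] e(3,4,1,2)] by blast
    then show ?thesis using increasing tr irr by (auto simp: trans_def irrefl_def)
  qed
qed

theorem lemma3p2:
  fixes n :: nat and R :: "((nat \<Rightarrow> nat) \<times> (nat \<Rightarrow> nat)) set"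
  assumes "reflection_order n R"
  shows "(\<forall>b l r w t1 t2 t1' t2'.
           distinct [b, l, r, w] \<and>
           bruhat_edge n b t1 l \<and> bruhat_edge n l t2 w \<and>
           bruhat_edge n b t1' r \<and> bruhat_edge n r t2' w \<and> (t1, t1') \<in> R
           \<longrightarrow> (t1, t2) \<in> R \<and> (t2', t2) \<in> R \<and> (t2', t1') \<in> R \<and> (t1, t1') \<in> R) \<and>
         (\<forall>x1 x2 x3 x4 t t' u u'.
           distinct [x1, x2, x3, x4] \<and>
           bruhat_edge n x1 t x2 \<and> bruhat_edge n x2 t' x4 \<and> (t, t') \<in> R \<and>
           bruhat_edge n x1 u x3 \<and> bruhat_edge n x3 u' x4
           \<longrightarrow> (u', u) \<in> R)"
  using diamond_reflection_order[OF assms] diamond_flip_decreasing[OF assms] by auto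

end
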